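(* Let $P(T)=a_0T^N+a_1T^{N-1}+\cdots+a_N\in\mathbb{L}_p[T]$ with $a_0\neq0$ and $a_N\neq 0$, let $s=s^P_{\max}$ be the maximal slope of its Newton polygon, and let $c\in\bar{\mathbb{F}}_p$ be a root of the residue polynomial $\mathrm{Res}_P(T)$ with multiplicity $q$. Put $P_{[c]}(T)=P(T+[c]p^{s})$. Then: (1) $N-q$ is a breakpoint of $\mathrm{NP}(P_{[c]})$; (2) in the range $x\leq N-q$, the Newton polygons $\mathrm{NP}(P)$ and $\mathrm{NP}(P_{[c]})$ coincide; (3) the remaining slopes of $\mathrm{NP}(P_{[c]})$ (on $N-q\le x\le N$) are strictly greater than $s$.
   Context: $\mathbb{L}_p=W(\bar{\mathbb{F}}_p)((p^{\mathbb{Q}}))$ is the $p$-adic Mal'cev–Neumann field of formal sums $\alpha=\sum_{x\in\mathbb{Q}}[\alpha_x]p^x$ ($\alpha_x\in\bar{\mathbb{F}}_p$, $[\cdot]$ Teichmüller lift, well-ordered support), with valuation $v_p(\alpha)=\min$ of support and $C_x(\alpha)=\alpha_x$. The Newton polygon $\mathrm{NP}(P)$ is the lower boundary of the convex hull of the points $(k,v_p(a_k))$ for $a_k\neq 0$; its vertices are breakpoints; $m_{\max}$ is the largest breakpoint $<N$, $s^P_{\max}=\frac{v_p(a_N)-v_p(a_{m_{\max}})}{N-m_{\max}}$, and the residue polynomial is $\mathrm{Res}_P(T)=\sum_{k=0}^{N-m_{\max}}C_{v_p(a_{m_{\max}})+s^P_{\max}(N-m_{\max}-k)}(a_{N-k})\,T^k\in\bar{\mathbb{F}}_p[T]$.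 *)

theory Defs
  imports "HOL-Analysis.Analysis" "HOL-Computational_Algebra.Polynomial"
begin

definition supp_fun :: "(rat \<Rightarrow> 'k::zero) \<Rightarrow> rat set" where
  "supp_fun f = {x. f x \<noteq> 0}"

definition well_ordered_rat :: "rat set \<Rightarrow> bool" where
  "well_ordered_rat S \<longleftrightarrow> (\<forall>T. T \<subseteq> S \<and> T \<noteq> {} \<longrightarrow> (\<exists>m\<in>T. \<forall>y\<in>T. m \<le> y))"

text \<open>
  The field \<open>'a\<close> plays the role of L_p = W(Fpbar)((p^Q)), the type \<open>'k\<close> the role of Fpbar.
  \<open>teich\<close> is the Teichmueller lift [.], \<open>pw x\<close> is the formal element p^x,
  \<open>C a x\<close> is the coefficient C_x(a), \<open>v\<close> is the valuation v_p (only meaningful on nonzero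
  elements).\<close>

locale malcev_neumann =
  fixes p :: nat
    and v :: "'a::field_char_0 \<Rightarrow> rat"
    and teich :: "'k::field \<Rightarrow> 'a"
    and pw :: "rat \<Rightarrow> 'a"
    and C :: "'a \<Rightarrow> rat \<Rightarrow> 'k"
  assumes prime_p: "prime p"
    and char_k: "CHAR('k) = p"
    and k_alg_closed: "\<And>f :: 'k poly. degree f > 0 \<Longrightarrow> \<exists>x. poly f x = 0"
    and k_algebraic: "\<And>x :: 'k. \<exists>n>0. x ^ (p ^ n) = x"
    and teich_mult: "\<And>x y. teich (x * y) = teich x * teich y"
    and teich_0: "teich 0 = 0" and teich_1: "teich 1 = 1"
    and pw_add: "\<And>x y. pw (x + y) = pw x * pw y"
    and pw_1: "pw 1 = of_nat p"
    and C_wo: "\<And>a. well_ordered_rat (supp_fun (C a))"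
    and C_inj: "\<And>a b. C a = C b \<Longrightarrow> a = b"
    and C_surj: "\<And>f. well_ordered_rat (supp_fun f) \<Longrightarrow> \<exists>a. C a = f"
    and C_monom: "\<And>c x. C (teich c * pw x) = (\<lambda>y. if y = x then c else 0)"
    and C_add_disjoint: "\<And>a b. supp_fun (C a) \<inter> supp_fun (C b) = {} \<Longrightarrow>
                            C (a + b) = (\<lambda>x. C a x + C b x)"
    and C_add_lowest: "\<And>a b x. (\<forall>y<x. C a y = 0 \<and> C b y = 0) \<Longrightarrow>
                            C (a + b) x = C a x + C b x"
    and v_def: "\<And>a. a \<noteq> 0 \<Longrightarrow> C a (v a) \<noteq> 0 \<and> (\<forall>y < v a. C a y = 0)"
    and v_mult: "\<And>a b. a \<noteq> 0 \<Longrightarrow> b \<noteq> 0 \<Longrightarrow> v (a * b) = v a + v b"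
    and C_lead_mult: "\<And>a b. a \<noteq> 0 \<Longrightarrow> b \<noteq> 0 \<Longrightarrow>
                            C (a * b) (v a + v b) = C a (v a) * C b (v b)"
    and C_approx: "\<And>a b y. (\<forall>x<y. C a x = C b x) \<longleftrightarrow> (a = b \<or> y \<le> v (a - b))"

text \<open>Paper indexing: P(T) = a_0 T^N + ... + a_N, so a_k = coeff P (N - k), N = degree P.\<close>

definition pc :: "'a::zero poly \<Rightarrow> nat \<Rightarrow> 'a" where
  "pc P k = coeff P (degree P - k)"

definition np_points :: "('a::zero \<Rightarrow> rat) \<Rightarrow> 'a poly \<Rightarrow> (real \<times> real) set" where
  "np_points v P = {(real k, real_of_rat (v (pc P k))) | k. k \<le> degree P \<and> pc P k \<noteq> 0}"

text \<open>The Newton polygon as a function on [0,N]: the lower boundary of the convex hull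
  of the points; its value is \<open>\<infinity>\<close> above x-values not covered by the hull.\<close>

definition NP :: "('a::zero \<Rightarrow> rat) \<Rightarrow> 'a poly \<Rightarrow> real \<Rightarrow> ereal" where
  "NP v P x = Inf {ereal y | y. (x, y) \<in> convex hull (np_points v P)}"

definition breakpoint :: "('a::zero \<Rightarrow> rat) \<Rightarrow> 'a poly \<Rightarrow> real \<Rightarrow> bool" where
  "breakpoint v P x \<longleftrightarrow> 0 \<le> x \<and> x \<le> real (degree P) \<and> NP v P x \<noteq> \<infinity> \<and>
     \<not> (\<exists>x1 x2. 0 \<le> x1 \<and> x1 < x \<and> x < x2 \<and> x2 \<le> real (degree P) \<and>
            NP v P x1 \<noteq> \<infinity> \<and> NP v P x2 \<noteq> \<infinity> \<and>
            real_of_ereal (NP v P x) =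
              ((x2 - x) * real_of_ereal (NP v P x1) + (x - x1) * real_of_ereal (NP v P x2))
                / (x2 - x1))"

definition m_max :: "('a::zero \<Rightarrow> rat) \<Rightarrow> 'a poly \<Rightarrow> nat" where
  "m_max v P = (GREATEST m. m < degree P \<and> breakpoint v P (real m))"

definition s_max :: "('a::zero \<Rightarrow> rat) \<Rightarrow> 'a poly \<Rightarrow> rat" where
  "s_max v P = (v (pc P (degree P)) - v (pc P (m_max v P))) / of_nat (degree P - m_max v P)"

definition res_poly :: "('a::zero \<Rightarrow> rat) \<Rightarrow> ('a \<Rightarrow> rat \<Rightarrow> 'k::comm_ring_1) \<Rightarrow> 'a poly \<Rightarrow> 'k poly" where
  "res_poly v C P =
     (let N = degree P; m = m_max v P; s = s_max v P in
      (\<Sum>k\<le>N - m. monom (C (pc P (N - k)) (v (pc P m) + s * of_nat (N - m - k))) k))"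

end

theory Submission
  imports Defs
begin

(*
  Index the coefficients as in the paper, a_k for P and b_j for P_[c], and let L be the line
  of slope s = s_max through the last point (N, v a_N); all points of NP(P) lie on or above L.
  Expanding P(T + [c] p^s) gives b_j = sum_{k <= j} binom(N - k, N - j) a_k ([c] p^s)^(j - k),
  whose k-th summand has valuation at least v a_k + (j - k) s >= L(j).  The coefficients of the
  summands at height L(j) add up to the coefficient of T^(N - j) in Res_P(T + c), which vanishes
  for N - j < q and not for N - j = q.  Hence (N - q, v b_(N-q)) lies on L and every later point
  of NP(P_[c]) lies strictly above L, giving (1) and (3).  For (2): if k is the first index
  minimising v a_k - k s among k <= j, then v b_k = v a_k and v b_j >= v a_k + (j - k) s, so each
  point of one polygon lies above a segment of slope s from a point of the other to (N, L(N)),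
  and adding (N, L(N)) to the points of P_[c] does not change their lower hull left of N - q.
*)

section \<open>Taylor shifts of polynomials\<close>

lemma pcompose_power_left: "pcompose (p ^ n) r = pcompose p r ^ n"
  by (induction n) (simp_all add: pcompose_mult pcompose_1)

lemma coeff_pcompose_linear_rev:
  fixes p :: "'a::comm_semiring_1 poly"
  assumes "degree p \<le> n" "j \<le> n"
  shows "coeff (pcompose p [:c, 1:]) (n - j) =
           (\<Sum>k\<le>j. coeff p (n - k) * of_nat ((n - k) choose (n - j)) * c ^ (j - k))"
proof -
  have "pcompose p [:c, 1:] = (\<Sum>i\<le>n. smult (coeff p i) ([:c, 1:] ^ i))"
    by (subst poly_as_sum_of_monoms'[OF assms(1), symmetric])
       (simp add: pcompose_sum pcompose_smult monom_altdef pcompose_power_left pcompose_pCons)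
  then have "coeff (pcompose p [:c, 1:]) (n - j) =
               (\<Sum>i\<le>n. coeff p i * coeff ([:c, 1:] ^ i) (n - j))"
    by (simp add: coeff_sum)
  also have "\<dots> = (\<Sum>k\<le>n. coeff p (n - k) * coeff ([:c, 1:] ^ (n - k)) (n - j))"
    by (rule sum.reindex_bij_witness[of _ "\<lambda>k. n - k" "\<lambda>k. n - k"]) auto
  also have "\<dots> = (\<Sum>k\<le>j. coeff p (n - k) * coeff ([:c, 1:] ^ (n - k)) (n - j))"
  proof (rule sum.mono_neutral_right)
    show "\<forall>k\<in>{..n} - {..j}. coeff p (n - k) * coeff ([:c, 1:] ^ (n - k)) (n - j) = 0"
    proof
      fix k assume "k \<in> {..n} - {..j}"
      then have "degree ([:c, 1:] ^ (n - k)) < n - j"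
        by (auto simp: degree_linear_power)
      then show "coeff p (n - k) * coeff ([:c, 1:] ^ (n - k)) (n - j) = 0"
        by (simp add: coeff_eq_0)
    qed
  qed (use assms(2) in auto)
  also have "\<dots> = (\<Sum>k\<le>j. coeff p (n - k) * of_nat ((n - k) choose (n - j)) * c ^ (j - k))"
    using assms(2) by (intro sum.cong) (auto simp: coeff_linear_poly_power mult.assoc)
  finally show ?thesis .
qed

lemma order_pcompose_linear:
  fixes p :: "'a::idom poly"
  assumes "p \<noteq> 0"
  shows "order a (pcompose p [:b, 1:]) = order (a + b) p"
proof -
  have dvd_iff: "[:-a, 1:] ^ n dvd pcompose p [:b, 1:] \<longleftrightarrow> [:-(a + b), 1:] ^ n dvd p" for n
  proof
    assume "[:-a, 1:] ^ n dvd pcompose p [:b, 1:]"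
    then have "pcompose ([:-a, 1:] ^ n) [:-b, 1:] dvd pcompose (pcompose p [:b, 1:]) [:-b, 1:]"
      by (auto simp: pcompose_mult elim!: dvdE)
    then show "[:-(a + b), 1:] ^ n dvd p"
      by (simp add: pcompose_power_left pcompose_pCons pcompose_assoc[symmetric])
  next
    assume "[:-(a + b), 1:] ^ n dvd p"
    then have "pcompose ([:-(a + b), 1:] ^ n) [:b, 1:] dvd pcompose p [:b, 1:]"
      by (auto simp: pcompose_mult elim!: dvdE)
    then show "[:-a, 1:] ^ n dvd pcompose p [:b, 1:]"
      by (simp add: pcompose_power_left pcompose_pCons)
  qed
  show ?thesis
  proof (rule order_unique_lemma)
    show "[:-a, 1:] ^ order (a + b) p dvd pcompose p [:b, 1:]"
      unfolding dvd_iff by (rule order_1)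
    show "\<not> [:-a, 1:] ^ Suc (order (a + b) p) dvd pcompose p [:b, 1:]"
      unfolding dvd_iff by (rule order_2[OF assms])
  qed
qed

lemma
  fixes p :: "'a::idom poly"
  assumes "p \<noteq> 0"
  shows coeff_less_order_0: "\<And>k. k < order 0 p \<Longrightarrow> coeff p k = 0"
    and coeff_order_0_nonzero: "coeff p (order 0 p) \<noteq> 0"
proof -
  show low: "coeff p k = 0" if "k < order 0 p" for k
    using that monom_1_dvd_iff[OF assms] monom_1_dvd_iff'[of "order 0 p" p] by auto
  show "coeff p (order 0 p) \<noteq> 0"
    using monom_1_dvd_iff[OF assms, of "Suc (order 0 p)"] monom_1_dvd_iff'[of "Suc (order 0 p)" p]
      low
    by (auto simp: less_Suc_eq)
qed

section \<open>Lower boundaries of planar convex hulls\<close>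

lemma convex_weightE:
  fixes x1 x x2 :: real
  assumes "x1 \<le> x" "x \<le> x2"
  obtains u where "0 \<le> u" "u \<le> 1" "x = u * x1 + (1 - u) * x2"
proof (cases "x1 = x2")
  case True
  then show ?thesis using assms that[of 1] by simp
next
  case False
  then have pos: "0 < x2 - x1" using assms by simp
  define u where "u = (x2 - x) / (x2 - x1)"
  have "u * (x2 - x1) = x2 - x"
    using pos by (simp add: u_def)
  then have "x = u * x1 + (1 - u) * x2"
    by (simp add: algebra_simps)
  moreover have "0 \<le> u" "u \<le> 1"
    using assms pos by (simp_all add: u_def)
  ultimately show ?thesis using that by blast
qed

definition lower_hull :: "(real \<times> real) set \<Rightarrow> real \<Rightarrow> ereal" where
  "lower_hull S x = Inf {ereal y | y. (x, y) \<in> convex hull S}"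

lemma lower_hull_le: "(x, y) \<in> convex hull S \<Longrightarrow> lower_hull S x \<le> ereal y"
  unfolding lower_hull_def by (rule Inf_lower) auto

lemma lower_hull_greatest:
  "(\<And>y. (x, y) \<in> convex hull S \<Longrightarrow> e \<le> ereal y) \<Longrightarrow> e \<le> lower_hull S x"
  unfolding lower_hull_def by (auto intro!: Inf_greatest)

lemma lower_hull_convex_comb:
  assumes "(x1, y1) \<in> convex hull S" "(x2, y2) \<in> convex hull S" "0 \<le> u" "u \<le> 1"
  shows "lower_hull S (u * x1 + (1 - u) * x2) \<le> ereal (u * y1 + (1 - u) * y2)"
proof -
  have "u *\<^sub>R (x1, y1) + (1 - u) *\<^sub>R (x2, y2) \<in> convex hull S"
    using assms by (intro convexD[OF convex_convex_hull]) auto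
  then show ?thesis by (intro lower_hull_le) simp
qed

lemma convex_hull_above_line:
  fixes a b :: real
  assumes "\<And>x y. (x, y) \<in> S \<Longrightarrow> a + b * x \<le> y" "(x, y) \<in> convex hull S"
  shows "a + b * x \<le> y"
proof -
  have "convex {z :: real \<times> real. inner (b, -1) z \<le> -a}"
    by (rule convex_halfspace_le)
  also have "{z :: real \<times> real. inner (b, -1) z \<le> -a} = {z. a + b * fst z \<le> snd z}"
    by (auto simp: inner_prod_def)
  finally have "convex hull S \<subseteq> {z. a + b * fst z \<le> snd z}"
    using assms(1) by (intro hull_minimal) auto
  then show ?thesis using assms(2) by auto
qed

lemma lower_hull_ge_line:
  fixes a b :: real
  assumes "\<And>x y. (x, y) \<in> S \<Longrightarrow> a + b * x \<le> y"
  shows "ereal (a + b * x) \<le> lower_hull S x"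
  using convex_hull_above_line[OF assms] by (intro lower_hull_greatest) simp

lemma lower_hull_attained:
  assumes "finite S" "lower_hull S x \<noteq> \<infinity>"
  obtains y where "(x, y) \<in> convex hull S" "lower_hull S x = ereal y"
proof -
  define F where "F = snd ` (convex hull S \<inter> {z. fst z = x})"
  have "F \<noteq> {}"
  proof
    assume "F = {}"
    then have "{ereal y | y. (x, y) \<in> convex hull S} = {}"
      by (force simp: F_def)
    then show False
      using assms(2) by (simp add: lower_hull_def top_ereal_def)
  qed
  have "compact (convex hull S \<inter> {z. fst z = x})"
    using assms(1) by (intro compact_Int_closed closed_Collect_eq finite_imp_compact_convex_hull)
                      (auto intro: continuous_intros)
  then have "compact F"
    unfolding F_def by (intro compact_continuous_image) (auto intro: continuous_intros)
  then obtain y where y: "y \<in> F" "\<And>y'. y' \<in> F \<Longrightarrow> y \<le> y'"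
    using compact_attains_inf[OF _ \<open>F \<noteq> {}\<close>] by blast
  have hull: "(x, y) \<in> convex hull S"
    using y(1) by (auto simp: F_def)
  have "lower_hull S x = ereal y"
  proof (rule antisym)
    show "lower_hull S x \<le> ereal y" using hull by (rule lower_hull_le)
    show "ereal y \<le> lower_hull S x"
      using y(2) by (intro lower_hull_greatest) (force simp: F_def)
  qed
  with hull show ?thesis by (rule that)
qed

lemma lower_hull_convex:
  assumes "finite S" "lower_hull S x1 = ereal y1" "lower_hull S x2 = ereal y2"
    and "0 \<le> u" "u \<le> 1"
  shows "lower_hull S (u * x1 + (1 - u) * x2) \<le> ereal (u * y1 + (1 - u) * y2)"
proof -
  obtain y1' where "(x1, y1') \<in> convex hull S" "lower_hull S x1 = ereal y1'"
    using lower_hull_attained[OF assms(1), of x1] assms(2) by auto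
  moreover obtain y2' where "(x2, y2') \<in> convex hull S" "lower_hull S x2 = ereal y2'"
    using lower_hull_attained[OF assms(1), of x2] assms(3) by auto
  ultimately show ?thesis
    using assms(2-5) lower_hull_convex_comb[of x1 y1 S x2 y2 u] by simp
qed

lemma lower_hull_on_line:
  fixes a b :: real
  assumes "(x1, a + b * x1) \<in> S" "(x2, a + b * x2) \<in> S" "x1 \<le> x" "x \<le> x2"
    and above: "\<And>x y. (x, y) \<in> S \<Longrightarrow> a + b * x \<le> y"
  shows "lower_hull S x = ereal (a + b * x)"
proof (rule antisym)
  obtain u where u: "0 \<le> u" "u \<le> 1" "x = u * x1 + (1 - u) * x2"
    using convex_weightE[OF assms(3,4)] .
  have "lower_hull S x \<le> ereal (u * (a + b * x1) + (1 - u) * (a + b * x2))"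
    unfolding u(3) using assms(1,2) u(1,2) by (intro lower_hull_convex_comb) (auto intro: hull_inc)
  also have "u * (a + b * x1) + (1 - u) * (a + b * x2) = a + b * x"
    by (simp add: u(3) algebra_simps)
  finally show "lower_hull S x \<le> ereal (a + b * x)" .
  show "ereal (a + b * x) \<le> lower_hull S x"
    using above by (rule lower_hull_ge_line)
qed

(* The supporting line is rotated slightly about the abscissa where g x + d = 0; the finiteness
   of S leaves room for this. *)
lemma lower_hull_gt_line:
  fixes a b g d :: real
  assumes "finite S"
    and above: "\<And>x y. (x, y) \<in> S \<Longrightarrow> a + b * x \<le> y"
    and strict: "\<And>x y. (x, y) \<in> S \<Longrightarrow> 0 < g * x + d \<Longrightarrow> a + b * x < y"
    and "0 < g * x + d"
  shows "ereal (a + b * x) < lower_hull S x"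
proof -
  define D where "D = (\<lambda>(x, y). (y - (a + b * x)) / (g * x + d)) ` {z \<in> S. 0 < g * fst z + d}"
  define e where "e = Min (insert 1 D)"
  have "finite D" using assms(1) by (simp add: D_def)
  then have e_pos: "0 < e"
    unfolding e_def by (subst Min_gr_iff) (auto simp: D_def intro!: divide_pos_pos dest: strict)
  have e_le: "e \<le> (y - (a + b * x)) / (g * x + d)" if "(x, y) \<in> S" "0 < g * x + d" for x y
    unfolding e_def using \<open>finite D\<close> that by (intro Min_le) (auto simp: D_def image_iff)
  have tilted: "(a + e * d) + (b + e * g) * x \<le> y" if "(x, y) \<in> S" for x y
  proof (cases "0 < g * x + d")
    case True
    then have "e * (g * x + d) \<le> y - (a + b * x)"
      using e_le[OF that True] by (simp add: pos_le_divide_eq)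
    then show ?thesis by (simp add: algebra_simps)
  next
    case False
    then have "e * (g * x + d) \<le> 0" using e_pos by (simp add: mult_nonneg_nonpos)
    then show ?thesis using above[OF that] by (simp add: algebra_simps)
  qed
  have "0 < e * (g * x + d)"
    using e_pos assms(4) by simp
  then have "a + b * x < (a + e * d) + (b + e * g) * x"
    by (simp add: algebra_simps)
  also have "ereal \<dots> \<le> lower_hull S x"
    using tilted by (rule lower_hull_ge_line)
  finally show ?thesis by simp
qed

lemma lower_hull_le_if_dominated:
  assumes "\<And>x y. (x, y) \<in> S' \<Longrightarrow> \<exists>y'\<le>y. (x, y') \<in> convex hull S"
  shows "lower_hull S x \<le> lower_hull S' x"
proof -
  define E where "E = (\<Union>z\<in>convex hull S. \<Union>w\<in>{0} \<times> {0::real..}. {z + w})"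
  have "convex E"
    unfolding E_def by (intro convex_sums convex_Times) auto
  moreover have "S' \<subseteq> E"
  proof
    fix z assume "z \<in> S'"
    then obtain x y y' where "z = (x, y)" "y' \<le> y" "(x, y') \<in> convex hull S"
      using assms by (metis prod.collapse)
    then show "z \<in> E"
      unfolding E_def by (intro UN_I[of "(x, y')"] UN_I[of "(0, y - y')"]) auto
  qed
  ultimately have "convex hull S' \<subseteq> E"
    by (intro hull_minimal)
  then show ?thesis
    by (intro lower_hull_greatest) (force simp: E_def intro: order_trans[OF lower_hull_le])
qed

lemma dominated_by_segment:
  fixes b :: real
  assumes "(xl, yl) \<in> convex hull T" "(xr, yr) \<in> convex hull T" "xl \<le> x" "x \<le> xr"
    and "yr \<le> yl + b * (xr - xl)" "yl + b * (x - xl) \<le> y"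
  shows "\<exists>y'\<le>y. (x, y') \<in> convex hull T"
proof -
  obtain u where u: "0 \<le> u" "u \<le> 1" "x = u * xl + (1 - u) * xr"
    using convex_weightE[OF assms(3,4)] .
  have "u *\<^sub>R (xl, yl) + (1 - u) *\<^sub>R (xr, yr) \<in> convex hull T"
    using assms(1,2) u by (intro convexD[OF convex_convex_hull]) auto
  moreover have "(1 - u) * yr \<le> (1 - u) * (yl + b * (xr - xl))"
    using u assms(5) by (intro mult_left_mono) auto
  then have "u * yl + (1 - u) * yr \<le> y"
    using assms(6) by (simp add: u(3) algebra_simps)
  ultimately show ?thesis
    by (intro exI[of _ "u * yl + (1 - u) * yr"]) (simp add: u(3))
qed

lemma lower_hull_insert_right:
  fixes a b :: real
  assumes P0: "(x0, a + b * x0) \<in> T" and above: "\<And>x y. (x, y) \<in> T \<Longrightarrow> a + b * x \<le> y"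
    and "x0 < R" "x \<le> x0"
  shows "lower_hull (insert (R, a + b * R) T) x = lower_hull T x"
proof (rule antisym)
  show "lower_hull (insert (R, a + b * R) T) x \<le> lower_hull T x"
    by (rule lower_hull_le_if_dominated) (auto intro: hull_inc)
  show "lower_hull T x \<le> lower_hull (insert (R, a + b * R) T) x"
  proof (rule lower_hull_greatest)
    fix y assume "(x, y) \<in> convex hull (insert (R, a + b * R) T)"
    moreover have "T \<noteq> {}" using P0 by auto
    ultimately obtain u v B where uv: "0 \<le> u" "0 \<le> v" "u + v = 1" "B \<in> convex hull T"
      and "(x, y) = u *\<^sub>R (R, a + b * R) + v *\<^sub>R B"
      unfolding convex_hull_insert[OF \<open>T \<noteq> {}\<close>] by blast
    moreover obtain bx "by" where "B = (bx, by)" by fastforce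
    ultimately have B: "(bx, by) \<in> convex hull T"
      and x: "x = u * R + v * bx" and y: "y = u * (a + b * R) + v * by" by auto
    show "lower_hull T x \<le> ereal y"
    proof (cases "u = 0")
      case True
      then show ?thesis using B uv x y by (simp add: lower_hull_le)
    next
      case False
      then have "0 < u" using uv by simp
      have "bx < x"
      proof (rule ccontr)
        assume "\<not> bx < x"
        then have "v * x \<le> v * bx" using uv by (simp add: mult_left_mono)
        moreover have "u * x < u * R" using \<open>0 < u\<close> assms(3,4) by simp
        ultimately have "(u + v) * x < x" using x by (simp add: algebra_simps)
        then show False using uv by simp
      qed
      obtain mu where mu: "0 \<le> mu" "mu \<le> 1" "x = mu * bx + (1 - mu) * x0"
        using convex_weightE[of bx x x0] \<open>bx < x\<close> assms(4) by auto
      have "mu \<le> v"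
      proof -
        have "x = u * R + (1 - u) * bx"
          using x uv(3) by (simp add: eq_diff_eq')
        then have "u * (R - bx) = x - bx"
          by (simp add: algebra_simps)
        also have "\<dots> = (1 - mu) * (x0 - bx)"
          using mu(3) by (simp add: algebra_simps)
        finally have "(1 - mu) * (x0 - bx) = u * (R - bx)" ..
        also have "\<dots> \<ge> u * (x0 - bx)"
          using uv(1) assms(3) by (intro mult_left_mono) auto
        finally have "u * (x0 - bx) \<le> (1 - mu) * (x0 - bx)" .
        then have "u \<le> 1 - mu"
          using \<open>bx < x\<close> assms(4) by (simp add: mult_le_cancel_right)
        then show ?thesis using uv(3) by simp
      qed
      define d where "d = by - (a + b * bx)"
      have "0 \<le> d"
        using convex_hull_above_line[OF above B] by (simp add: d_def)
      have "lower_hull T x \<le> ereal (mu * by + (1 - mu) * (a + b * x0))"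
        unfolding mu(3) using B P0 mu(1,2) by (intro lower_hull_convex_comb) (auto intro: hull_inc)
      also have "mu * by + (1 - mu) * (a + b * x0) = a + b * x + mu * d"
        by (simp add: mu(3) d_def algebra_simps)
      also have "\<dots> \<le> a + b * x + v * d"
        using \<open>mu \<le> v\<close> \<open>0 \<le> d\<close> by (simp add: mult_right_mono)
      also have "a + b * x + v * d = y"
        using uv(3) by (simp add: x y d_def algebra_simps flip: distrib_left)
      finally show ?thesis by simp
    qed
  qed
qed

lemma lower_hull_slope_gt:
  fixes a b :: real
  assumes "finite S" "lower_hull S x0 = ereal (a + b * x0)"
    and right: "\<And>y. x0 < y \<Longrightarrow> ereal (a + b * y) < lower_hull S y"
    and "x0 \<le> x" "x < y" "lower_hull S x \<noteq> \<infinity>"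
  shows "lower_hull S x + ereal (b * (y - x)) < lower_hull S y"
proof (cases "lower_hull S y = \<infinity>")
  case True
  then show ?thesis using assms(6) by simp
next
  case False
  obtain fx where fx: "lower_hull S x = ereal fx"
    using lower_hull_attained[OF assms(1,6)] by blast
  obtain fy where fy: "lower_hull S y = ereal fy"
    using lower_hull_attained[OF assms(1) False] by blast
  have "a + b * y < fy"
    using right[of y] assms(4,5) fy by simp
  obtain mu where mu: "0 \<le> mu" "mu \<le> 1" "x = mu * x0 + (1 - mu) * y"
    using convex_weightE[of x0 x y] assms(4,5) by auto
  have "mu \<noteq> 0" using mu(3) assms(5) by auto
  have "fx \<le> mu * (a + b * x0) + (1 - mu) * fy"
    using lower_hull_convex[OF assms(1,2) fy mu(1,2)] mu(3) fx by simp
  also have "\<dots> = fy - mu * (fy - (a + b * y)) - b * (y - x)"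
    by (simp add: mu(3) algebra_simps)
  also have "\<dots> < fy - b * (y - x)"
    using \<open>a + b * y < fy\<close> \<open>mu \<noteq> 0\<close> mu(1) by simp
  finally show ?thesis using fx fy by simp
qed

section \<open>Newton polygons and their last edge\<close>

lemma NP_eq_lower_hull: "NP v P = lower_hull (np_points v P)"
  by (simp add: fun_eq_iff NP_def lower_hull_def)

lemma finite_np_points: "finite (np_points v P)"
  unfolding np_points_def by (rule finite_image_set) simp

lemma breakpointI_supporting_line:
  fixes a b x0 :: real
  assumes "0 \<le> x0" "x0 \<le> real (degree P)"
    and on_line: "NP v P x0 = ereal (a + b * x0)"
    and above: "\<And>x. ereal (a + b * x) \<le> NP v P x"
    and strict: "(\<forall>x<x0. ereal (a + b * x) < NP v P x) \<or> (\<forall>x>x0. ereal (a + b * x) < NP v P x)"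
  shows "breakpoint v P x0"
proof -
  have interpolation_above:
    "a + b * x0 < ((x2 - x0) * real_of_ereal (NP v P x1) + (x0 - x1) * real_of_ereal (NP v P x2))
                    / (x2 - x1)"
    if x: "x1 < x0" "x0 < x2" and finite: "NP v P x1 \<noteq> \<infinity>" "NP v P x2 \<noteq> \<infinity>" for x1 x2
  proof -
    obtain r1 r2 where r: "NP v P x1 = ereal r1" "NP v P x2 = ereal r2"
      using above[of x1] above[of x2] finite by (cases "NP v P x1"; cases "NP v P x2") auto
    have "a + b * x1 \<le> r1" "a + b * x2 \<le> r2" "a + b * x1 < r1 \<or> a + b * x2 < r2"
      using above[of x1] above[of x2] strict x r by auto
    then have "(x2 - x0) * (a + b * x1) + (x0 - x1) * (a + b * x2)
        < (x2 - x0) * r1 + (x0 - x1) * r2"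
      using x by (auto intro: add_less_le_mono add_le_less_mono)
    moreover have "(x2 - x0) * (a + b * x1) + (x0 - x1) * (a + b * x2) = (a + b * x0) * (x2 - x1)"
      by (simp add: algebra_simps)
    ultimately show ?thesis
      using x r by (simp add: pos_less_divide_eq)
  qed
  show ?thesis
    unfolding breakpoint_def using assms(1,2) on_line
    by (auto dest!: interpolation_above)
qed

lemma not_breakpoint_if_affine:
  fixes a b :: real
  assumes "0 \<le> lo" "lo < x" "x < hi" "hi \<le> real (degree P)"
    and affine: "\<And>y. lo \<le> y \<Longrightarrow> y \<le> hi \<Longrightarrow> NP v P y = ereal (a + b * y)"
  shows "\<not> breakpoint v P x"
proof -
  have "a + b * x = ((hi - x) * (a + b * lo) + (x - lo) * (a + b * hi)) / (hi - lo)"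
    using assms(2,3) by (simp add: field_simps)
  moreover have "NP v P lo = ereal (a + b * lo)" "NP v P hi = ereal (a + b * hi)"
    "NP v P x = ereal (a + b * x)"
    using affine assms(2,3) by auto
  ultimately show ?thesis
    using assms(1-4) unfolding breakpoint_def by force
qed

definition end_line :: "('a::zero \<Rightarrow> rat) \<Rightarrow> 'a poly \<Rightarrow> rat \<Rightarrow> nat \<Rightarrow> rat" where
  "end_line v P \<sigma> k = v (pc P (degree P)) + \<sigma> * (of_nat k - of_nat (degree P))"

lemma end_line_degree [simp]: "end_line v P \<sigma> (degree P) = v (pc P (degree P))"
  by (simp add: end_line_def)

lemma end_line_shift [simp]: "end_line v P \<sigma> j - (of_nat j - of_nat k) * \<sigma> = end_line v P \<sigma> k"
  by (simp add: end_line_def algebra_simps)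

lemma of_rat_end_line:
  "real_of_rat (end_line v P \<sigma> k) =
     (real_of_rat (v (pc P (degree P))) - real_of_rat \<sigma> * real (degree P)) + real_of_rat \<sigma> * real k"
  by (simp add: end_line_def of_rat_add of_rat_mult of_rat_diff algebra_simps)

lemma of_rat_affine:
  "real_of_rat (a + b * (of_nat j - of_nat k)) = real_of_rat a + real_of_rat b * (real j - real k)"
  by (simp add: of_rat_add of_rat_mult of_rat_diff)

lemma first_arg_minE:
  fixes f :: "nat \<Rightarrow> 'b::linorder"
  assumes "finite K" "K \<noteq> {}"
  obtains k where "k \<in> K" "\<And>i. i \<in> K \<Longrightarrow> f k \<le> f i" "\<And>i. i \<in> K \<Longrightarrow> i < k \<Longrightarrow> f k < f i"
proof -
  define k where "k = (LEAST k. k \<in> K \<and> f k = Min (f ` K))"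
  have "Min (f ` K) \<in> f ` K"
    using assms by (intro Min_in) auto
  then have "\<exists>k. k \<in> K \<and> f k = Min (f ` K)"
    by (metis imageE)
  then have k: "k \<in> K" "f k = Min (f ` K)"
    unfolding k_def by (metis (mono_tags, lifting) LeastI_ex)+
  have le: "f k \<le> f i" if "i \<in> K" for i
    using k(2) assms(1) that by simp
  moreover have "f k < f i" if "i \<in> K" "i < k" for i
    using not_less_Least[of i "\<lambda>k. k \<in> K \<and> f k = Min (f ` K)"] le[OF that(1)] that k(2)
    by (auto simp: k_def[symmetric] order_le_less)
  ultimately show ?thesis using k(1) that by blast
qed

context
  fixes v :: "'a::zero \<Rightarrow> rat" and P :: "'a poly"
begin

lemma m_max_s_max_eqI:
  assumes "m < degree P" "pc P m \<noteq> 0" "pc P (degree P) \<noteq> 0"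
    and above: "\<And>k. k \<le> degree P \<Longrightarrow> pc P k \<noteq> 0 \<Longrightarrow> end_line v P \<sigma> k \<le> v (pc P k)"
    and strict: "\<And>k. k < m \<Longrightarrow> pc P k \<noteq> 0 \<Longrightarrow> end_line v P \<sigma> k < v (pc P k)"
    and on_line: "end_line v P \<sigma> m = v (pc P m)"
  shows "m_max v P = m" "s_max v P = \<sigma>"
proof -
  define N where "N = degree P"
  define a where "a = real_of_rat (v (pc P N)) - real_of_rat \<sigma> * real N"
  define b where "b = real_of_rat \<sigma>"
  have line: "a + b * real k = real_of_rat (end_line v P \<sigma> k)" for k
    by (simp add: a_def b_def N_def of_rat_end_line)
  have S: "np_points v P = {(real k, real_of_rat (v (pc P k))) | k. k \<le> N \<and> pc P k \<noteq> 0}"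
    by (simp add: np_points_def N_def)
  have S_above: "a + b * x \<le> y" if "(x, y) \<in> np_points v P" for x y
    using that above by (auto simp: S line N_def of_rat_less_eq)
  have S_m: "(real m, a + b * real m) \<in> np_points v P"
    using assms(1,2) on_line by (auto simp: S line N_def)
  have S_N: "(real N, a + b * real N) \<in> np_points v P"
    using assms(3) by (auto simp: S line N_def)
  have NP_edge: "NP v P x = ereal (a + b * x)" if "real m \<le> x" "x \<le> real N" for x
    unfolding NP_eq_lower_hull using that by (intro lower_hull_on_line[OF S_m S_N _ _ S_above])
  have "breakpoint v P (real m)"
  proof (rule breakpointI_supporting_line[where a = a and b = b])
    show "NP v P (real m) = ereal (a + b * real m)"
      using NP_edge assms(1) by (simp add: N_def)
    show "ereal (a + b * x) \<le> NP v P x" for x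
      unfolding NP_eq_lower_hull using S_above by (rule lower_hull_ge_line)
    have "ereal (a + b * x) < NP v P x" if "x < real m" for x
      unfolding NP_eq_lower_hull
    proof (rule lower_hull_gt_line[OF finite_np_points S_above, where g = "-1" and d = "real m"])
      show "a + b * x' < y" if "(x', y) \<in> np_points v P" "0 < - 1 * x' + real m" for x' y
        using that strict by (auto simp: S line of_rat_less)
    next
      show "0 < - 1 * x + real m" using that by linarith
    qed
    then show "(\<forall>x<real m. ereal (a + b * x) < NP v P x) \<or>
        (\<forall>x>real m. ereal (a + b * x) < NP v P x)"
      by blast
  qed (use assms(1) in auto)
  moreover have "\<not> breakpoint v P (real j)" if "m < j" "j < N" for j
    using that NP_edge
    by (intro not_breakpoint_if_affine[where lo = "real m" and hi = "real N" and a = a and b = b])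
       (auto simp: N_def)
  ultimately show m: "m_max v P = m"
    unfolding m_max_def using assms(1)
    by (intro Greatest_equality) (auto simp: N_def not_le[symmetric])
  have "v (pc P N) - v (pc P m) = \<sigma> * of_nat (N - m)"
    using on_line assms(1) by (simp add: end_line_def N_def of_nat_diff algebra_simps)
  then show "s_max v P = \<sigma>"
    using assms(1) by (simp add: s_max_def m N_def)
qed

lemma last_edge:
  assumes "0 < degree P" "pc P 0 \<noteq> 0" "pc P (degree P) \<noteq> 0"
  shows "m_max v P < degree P" "pc P (m_max v P) \<noteq> 0"
    and "\<And>k. k \<le> degree P \<Longrightarrow> pc P k \<noteq> 0 \<Longrightarrow> end_line v P (s_max v P) k \<le> v (pc P k)"
    and "\<And>k. k < m_max v P \<Longrightarrow> pc P k \<noteq> 0 \<Longrightarrow> end_line v P (s_max v P) k < v (pc P k)"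
    and "end_line v P (s_max v P) (m_max v P) = v (pc P (m_max v P))"
proof -
  define N where "N = degree P"
  define K where "K = {k. k < N \<and> pc P k \<noteq> 0}"
  define slope where "slope k = (v (pc P N) - v (pc P k)) / (of_nat N - of_nat k)" for k :: nat
  have "finite K" "K \<noteq> {}"
    using assms(1,2) by (auto simp: K_def N_def)
  then obtain m where m: "m \<in> K" "\<And>i. i \<in> K \<Longrightarrow> slope i \<le> slope m"
    "\<And>i. i \<in> K \<Longrightarrow> i < m \<Longrightarrow> slope i < slope m"
    using first_arg_minE[of K "\<lambda>k. - slope k"] by auto
  define \<sigma> where "\<sigma> = slope m"
  have excess: "end_line v P \<sigma> k - v (pc P k) = (of_nat N - of_nat k) * (slope k - \<sigma>)"
    if "k < N" for k
    using that by (simp add: slope_def end_line_def N_def field_simps)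
  have above: "end_line v P \<sigma> k \<le> v (pc P k)" if "k \<le> N" "pc P k \<noteq> 0" for k
  proof (cases "k = N")
    case False
    then have "slope k \<le> \<sigma>" "k < N"
      using that m(2) by (auto simp: K_def \<sigma>_def)
    then have "(of_nat N - of_nat k) * (slope k - \<sigma>) \<le> 0"
      by (intro mult_nonneg_nonpos) auto
    then show ?thesis
      using excess[OF \<open>k < N\<close>] by simp
  qed (simp add: N_def)
  have strict: "end_line v P \<sigma> k < v (pc P k)" if "k < m" "pc P k \<noteq> 0" for k
  proof -
    have "slope k < \<sigma>" "k < N"
      using that m(1,3) by (auto simp: K_def \<sigma>_def)
    then have "(of_nat N - of_nat k) * (slope k - \<sigma>) < 0"
      by (intro mult_pos_neg) auto
    then show ?thesis
      using excess[OF \<open>k < N\<close>] by simp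
  qed
  have "end_line v P \<sigma> m = v (pc P m)"
    using excess[of m] m(1) by (simp add: K_def \<sigma>_def)
  then have "m_max v P = m" "s_max v P = \<sigma>"
    using m(1) assms(3) above strict by (intro m_max_s_max_eqI; simp add: K_def N_def)+
  with m(1) above strict \<open>end_line v P \<sigma> m = v (pc P m)\<close>
  show "m_max v P < degree P" "pc P (m_max v P) \<noteq> 0"
    and "\<And>k. k \<le> degree P \<Longrightarrow> pc P k \<noteq> 0 \<Longrightarrow> end_line v P (s_max v P) k \<le> v (pc P k)"
    and "\<And>k. k < m_max v P \<Longrightarrow> pc P k \<noteq> 0 \<Longrightarrow> end_line v P (s_max v P) k < v (pc P k)"
    and "end_line v P (s_max v P) (m_max v P) = v (pc P (m_max v P))"
    by (auto simp: K_def N_def)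
qed

end

section \<open>Mal'cev--Neumann expansions\<close>

context malcev_neumann
begin

lemma C_zero [simp]: "C 0 x = 0"
  using C_monom[of 0 0] by (simp add: teich_0)

lemma pw_0: "pw 0 = 1"
proof -
  have "pw 1 \<noteq> 0" using pw_1 prime_p by (simp add: prime_gt_0_nat)
  moreover have "pw 1 = pw 0 * pw 1" using pw_add[of 0 1] by simp
  ultimately show ?thesis by simp
qed

lemma C_one: "C 1 = (\<lambda>x. if x = 0 then 1 else 0)"
  using C_monom[of 1 0] by (simp add: teich_1 pw_0)

lemma C_less_v: "a \<noteq> 0 \<Longrightarrow> x < v a \<Longrightarrow> C a x = 0"
  using v_def by blast

definition vanishes_below :: "rat \<Rightarrow> 'a \<Rightarrow> bool" where
  "vanishes_below y a \<longleftrightarrow> (\<forall>x<y. C a x = 0)"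

lemma vanishes_below_iff: "vanishes_below y a \<longleftrightarrow> a = 0 \<or> y \<le> v a"
  using C_approx[where a = a and b = 0 and y = y] by (simp add: vanishes_below_def)

lemma vanishes_below_C_nonzero:
  assumes "vanishes_below y a" "C a y \<noteq> 0"
  shows "a \<noteq> 0" "v a = y"
proof -
  show "a \<noteq> 0" using assms(2) by auto
  then show "v a = y"
    using assms C_less_v[of a y] by (force simp: vanishes_below_iff)
qed

lemma vanishes_below_C_zero_less_v:
  assumes "vanishes_below y a" "a \<noteq> 0" "C a y = 0"
  shows "y < v a"
  using assms v_def[of a] by (force simp: vanishes_below_iff order_le_less)

lemma vanishes_below_add:
  assumes "vanishes_below y a" "vanishes_below y b"
  shows "vanishes_below y (a + b)" "C (a + b) y = C a y + C b y"
proof -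
  have "C (a + b) x = C a x + C b x" if "x \<le> y" for x
    using assms that by (intro C_add_lowest) (auto simp: vanishes_below_def)
  then show "vanishes_below y (a + b)" "C (a + b) y = C a y + C b y"
    using assms by (auto simp: vanishes_below_def)
qed

lemma vanishes_below_sum:
  assumes "finite A" "\<And>i. i \<in> A \<Longrightarrow> vanishes_below y (f i)"
  shows "vanishes_below y (sum f A) \<and> C (sum f A) y = (\<Sum>i\<in>A. C (f i) y)"
  using assms
proof (induction A rule: finite_induct)
  case empty
  then show ?case by (simp add: vanishes_below_def)
next
  case (insert i A)
  then show ?case
    using vanishes_below_add[of y "f i" "sum f A"] by simp
qed

lemma vanishes_below_mult:
  assumes a: "vanishes_below y a" and b: "vanishes_below z b"
  shows "vanishes_below (y + z) (a * b) \<and> C (a * b) (y + z) = C a y * C b z"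
proof (cases "a = 0 \<or> b = 0")
  case True
  then show ?thesis by (auto simp: vanishes_below_def)
next
  case False
  then have nz: "a \<noteq> 0" "b \<noteq> 0" and le: "y \<le> v a" "z \<le> v b"
    using a b by (auto simp: vanishes_below_iff)
  have "C (a * b) (y + z) = C a y * C b z"
  proof (cases "v a = y \<and> v b = z")
    case True
    then show ?thesis using C_lead_mult[OF nz] by blast
  next
    case False
    then have "y < v a \<or> z < v b" and "y + z < v (a * b)"
      using le by (auto simp: v_mult[OF nz])
    then show ?thesis
      using nz C_less_v[of a y] C_less_v[of b z] C_less_v[of "a * b" "y + z"] by auto
  qed
  then show ?thesis
    using nz le by (simp add: vanishes_below_iff v_mult add_mono)
qed

lemma vanishes_below_of_nat: "vanishes_below 0 (of_nat n) \<and> C (of_nat n) 0 = of_nat n"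
proof (induction n)
  case 0
  then show ?case by (simp add: vanishes_below_def)
next
  case (Suc n)
  have "vanishes_below 0 1" by (simp add: vanishes_below_def C_one)
  then show ?case
    using vanishes_below_add[of 0 1 "of_nat n"] Suc by (simp add: C_one)
qed

lemma teich_power: "teich (c ^ n) = teich c ^ n"
  by (induction n) (simp_all add: teich_1 teich_mult)

lemma pw_of_nat_mult: "pw (of_nat n * s) = pw s ^ n"
proof (induction n)
  case (Suc n)
  have "pw (of_nat (Suc n) * s) = pw (s + of_nat n * s)"
    by (simp add: algebra_simps)
  then show ?case using Suc by (simp add: pw_add)
qed (simp add: pw_0)

lemma vanishes_below_teich_pw_power:
  "vanishes_below (of_nat e * s) ((teich c * pw s) ^ e) \<and>
     C ((teich c * pw s) ^ e) (of_nat e * s) = c ^ e"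
proof -
  have "(teich c * pw s) ^ e = teich (c ^ e) * pw (of_nat e * s)"
    by (simp add: teich_power pw_of_nat_mult power_mult_distrib)
  then show ?thesis by (simp add: C_monom vanishes_below_def)
qed

lemma vanishes_below_shift_term:
  assumes "vanishes_below y a"
  shows "vanishes_below (y + of_nat e * s) (a * of_nat n * (teich c * pw s) ^ e)
    \<and> C (a * of_nat n * (teich c * pw s) ^ e) (y + of_nat e * s) = C a y * of_nat n * c ^ e"
proof -
  have an: "vanishes_below y (a * of_nat n) \<and> C (a * of_nat n) y = C a y * of_nat n"
    using vanishes_below_mult[OF assms conjunct1[OF vanishes_below_of_nat]] vanishes_below_of_nat
    by simp
  show ?thesis
    using vanishes_below_mult[OF conjunct1[OF an] conjunct1[OF vanishes_below_teich_pw_power]]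
      an vanishes_below_teich_pw_power by simp
qed

lemma vanishes_below_pc_pcompose_shift:
  fixes P :: "'a poly" and c :: 'k and s :: rat
  defines "t \<equiv> teich c * pw s"
  assumes "j \<le> degree P"
    and low: "\<And>k. k \<le> j \<Longrightarrow> vanishes_below (y - (of_nat j - of_nat k) * s) (pc P k)"
  shows "vanishes_below y (pc (pcompose P [:t, 1:]) j) \<and>
    C (pc (pcompose P [:t, 1:]) j) y = (\<Sum>k\<le>j. C (pc P k) (y - (of_nat j - of_nat k) * s)
      * of_nat ((degree P - k) choose (degree P - j)) * c ^ (j - k))"
proof -
  define N where "N = degree P"
  have "pc (pcompose P [:t, 1:]) j = coeff (pcompose P [:t, 1:]) (N - j)"
    by (simp add: pc_def degree_pcompose N_def)
  also have "\<dots> = (\<Sum>k\<le>j. pc P k * of_nat ((N - k) choose (N - j)) * t ^ (j - k))"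
    using assms(2) by (simp add: coeff_pcompose_linear_rev N_def pc_def)
  finally have sum: "pc (pcompose P [:t, 1:]) j = \<dots>" .
  have "vanishes_below y (pc P k * of_nat ((N - k) choose (N - j)) * t ^ (j - k)) \<and>
      C (pc P k * of_nat ((N - k) choose (N - j)) * t ^ (j - k)) y =
        C (pc P k) (y - (of_nat j - of_nat k) * s) * of_nat ((N - k) choose (N - j)) * c ^ (j - k)"
    if "k \<le> j" for k
    using vanishes_below_shift_term[OF low[OF that], of "j - k" s "(N - k) choose (N - j)" c] that
    by (simp add: t_def of_nat_diff)
  then show ?thesis
    unfolding sum N_def[symmetric] using vanishes_below_sum[of "{..j}"] by simp
qed

end

section \<open>Shifting by a root of the residue polynomial\<close>

locale residue_root = malcev_neumann p v teich pw C
  for p :: nat and v :: "'a::field_char_0 \<Rightarrow> rat" and teich :: "'k::field \<Rightarrow> 'a"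
    and pw :: "rat \<Rightarrow> 'a" and C :: "'a \<Rightarrow> rat \<Rightarrow> 'k" +
  fixes P :: "'a poly" and c :: 'k
  assumes degree_pos: "0 < degree P" and pc_0: "pc P 0 \<noteq> 0"
    and pc_degree: "pc P (degree P) \<noteq> 0"
    and residue_root: "poly (res_poly v C P) c = 0"
begin

abbreviation "N \<equiv> degree P"
abbreviation "s \<equiv> s_max v P"
abbreviation "line \<equiv> end_line v P s"
abbreviation "R \<equiv> res_poly v C P"
abbreviation "q \<equiv> order c R"
abbreviation "Pc \<equiv> pcompose P [:teich c * pw s, 1:]"
abbreviation "tilt k \<equiv> v (pc P k) - of_nat k * s"

lemmas m_max_less_degree = last_edge(1)[where v = v, OF degree_pos pc_0 pc_degree]
lemmas line_le_v_pc = last_edge(3)[where v = v, OF degree_pos pc_0 pc_degree]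
lemmas line_less_v_pc = last_edge(4)[where v = v, OF degree_pos pc_0 pc_degree]
lemmas line_m_max = last_edge(5)[where v = v, OF degree_pos pc_0 pc_degree]

lemma degree_Pc: "degree Pc = N"
  by (simp add: degree_pcompose)

lemma vanishes_below_line: "k \<le> N \<Longrightarrow> vanishes_below (line k) (pc P k)"
  using line_le_v_pc[of k] by (auto simp: vanishes_below_iff)

lemma coeff_res_poly:
  assumes "i \<le> N"
  shows "coeff R i = C (pc P (N - i)) (line (N - i))"
proof -
  define m where "m = m_max v P"
  have "coeff R i =
      (if i \<le> N - m then C (pc P (N - i)) (v (pc P m) + s * of_nat (N - m - i)) else 0)"
    by (simp add: res_poly_def Let_def coeff_sum m_def)
  also have "\<dots> = C (pc P (N - i)) (line (N - i))"
  proof (cases "i \<le> N - m")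
    case True
    then have "v (pc P m) + s * of_nat (N - m - i) = line (N - i)"
      using m_max_less_degree line_m_max by (simp add: m_def end_line_def of_nat_diff algebra_simps)
    then show ?thesis using True by simp
  next
    case False
    then have "N - i < m"
      using assms by (simp add: m_def)
    then have "pc P (N - i) \<noteq> 0 \<Longrightarrow> line (N - i) < v (pc P (N - i))"
      using line_less_v_pc[of "N - i"] by (simp add: m_def)
    then show ?thesis using False by (cases "pc P (N - i) = 0") (auto simp: C_less_v)
  qed
  finally show ?thesis .
qed

lemma degree_res_poly: "degree R \<le> N"
  by (rule degree_le) (auto simp: res_poly_def Let_def coeff_sum)

lemma res_poly_nonzero: "R \<noteq> 0"
proof -
  have "coeff R 0 \<noteq> 0"
    using coeff_res_poly[of 0] v_def[OF pc_degree] by simp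
  then show ?thesis by auto
qed

lemma order_residue_root: "0 < q" "q \<le> N"
  using residue_root res_poly_nonzero order_degree[OF res_poly_nonzero, of c] degree_res_poly
  by (simp_all add: order_root)

lemma coeff_shifted_res_poly:
  assumes "j \<le> N"
  shows "coeff (pcompose R [:c, 1:]) (N - j) =
           (\<Sum>k\<le>j. C (pc P k) (line k) * of_nat ((N - k) choose (N - j)) * c ^ (j - k))"
  using assms by (simp add: coeff_pcompose_linear_rev degree_res_poly coeff_res_poly)

lemma C_pc_Pc_line:
  assumes "j \<le> N"
  shows "vanishes_below (line j) (pc Pc j) \<and>
    C (pc Pc j) (line j) = coeff (pcompose R [:c, 1:]) (N - j)"
  using vanishes_below_pc_pcompose_shift[of j P "line j" s c] assms
  by (simp add: vanishes_below_line coeff_shifted_res_poly)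

lemma line_le_v_pc_Pc: "j \<le> N \<Longrightarrow> pc Pc j \<noteq> 0 \<Longrightarrow> line j \<le> v (pc Pc j)"
  using C_pc_Pc_line[of j] by (simp add: vanishes_below_iff)

lemma v_pc_Pc_vertex: "pc Pc (N - q) \<noteq> 0" "v (pc Pc (N - q)) = line (N - q)"
proof -
  have "order 0 (pcompose R [:c, 1:]) = q"
    using order_pcompose_linear[OF res_poly_nonzero] by simp
  then have "C (pc Pc (N - q)) (line (N - q)) \<noteq> 0"
    using C_pc_Pc_line[of "N - q"] order_residue_root(2)
      coeff_order_0_nonzero[of "pcompose R [:c, 1:]"] res_poly_nonzero
    by (simp add: pcompose_eq_0_iff)
  then show "pc Pc (N - q) \<noteq> 0" "v (pc Pc (N - q)) = line (N - q)"
    using vanishes_below_C_nonzero C_pc_Pc_line[of "N - q"] by auto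
qed

lemma line_less_v_pc_Pc:
  assumes "N - q < j" "j \<le> N" "pc Pc j \<noteq> 0"
  shows "line j < v (pc Pc j)"
proof -
  have "order 0 (pcompose R [:c, 1:]) = q"
    using order_pcompose_linear[OF res_poly_nonzero] by simp
  then have "C (pc Pc j) (line j) = 0"
    using C_pc_Pc_line[OF assms(2)] assms(1,2)
      coeff_less_order_0[of "pcompose R [:c, 1:]" "N - j"] res_poly_nonzero
    by (simp add: pcompose_eq_0_iff)
  then show ?thesis
    using vanishes_below_C_zero_less_v C_pc_Pc_line[OF assms(2)] assms(3) by blast
qed

lemma v_pc_Pc_ge_tilt:
  assumes "k0 \<le> j" "j \<le> N" "\<And>k. k \<le> j \<Longrightarrow> pc P k \<noteq> 0 \<Longrightarrow> tilt k0 \<le> tilt k"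
    and "pc Pc j \<noteq> 0"
  shows "tilt k0 + of_nat j * s \<le> v (pc Pc j)"
proof -
  have "vanishes_below (tilt k0 + of_nat j * s - (of_nat j - of_nat k) * s) (pc P k)"
    if "k \<le> j" for k
    using assms(3)[OF that] by (auto simp: vanishes_below_iff algebra_simps)
  then have "vanishes_below (tilt k0 + of_nat j * s) (pc Pc j)"
    using vanishes_below_pc_pcompose_shift[OF assms(2), of "tilt k0 + of_nat j * s" s c] by blast
  then show ?thesis
    using assms(4) by (simp add: vanishes_below_iff)
qed

lemma v_pc_Pc_first_min_tilt:
  assumes "k0 \<le> N" "pc P k0 \<noteq> 0" "\<And>k. k < k0 \<Longrightarrow> pc P k \<noteq> 0 \<Longrightarrow> tilt k0 < tilt k"
  shows "pc Pc k0 \<noteq> 0" "v (pc Pc k0) = v (pc P k0)"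
proof -
  define y where "y k = v (pc P k0) - (of_nat k0 - of_nat k) * s" for k
  have below: "y k < v (pc P k)" if "k < k0" "pc P k \<noteq> 0" for k
    using assms(3)[OF that] by (simp add: y_def algebra_simps)
  have "vanishes_below (y k) (pc P k)" if "k \<le> k0" for k
  proof (cases "k = k0")
    case False
    then have "k < k0" using that by simp
    then show ?thesis
      using below[of k] by (cases "pc P k = 0") (auto simp: vanishes_below_iff)
  qed (simp add: vanishes_below_iff y_def)
  then have vanishes: "vanishes_below (v (pc P k0)) (pc Pc k0)" and
    "C (pc Pc k0) (v (pc P k0)) =
       (\<Sum>k\<le>k0. C (pc P k) (y k) * of_nat ((N - k) choose (N - k0)) * c ^ (k0 - k))"
    using vanishes_below_pc_pcompose_shift[OF assms(1), of "v (pc P k0)" s c]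
    by (simp_all add: y_def)
  moreover have "(\<Sum>k\<le>k0. C (pc P k) (y k) * of_nat ((N - k) choose (N - k0)) * c ^ (k0 - k)) =
      C (pc P k0) (v (pc P k0))"
  proof -
    have "C (pc P k) (y k) * of_nat ((N - k) choose (N - k0)) * c ^ (k0 - k) =
        (if k = k0 then C (pc P k0) (v (pc P k0)) else 0)" if "k \<in> {..k0}" for k
      using that below[of k] by (cases "pc P k = 0") (auto simp: y_def C_less_v)
    then show ?thesis by (simp add: sum.cong[OF refl, of "{..k0}"])
  qed
  moreover have "C (pc P k0) (v (pc P k0)) \<noteq> 0"
    using v_def[OF assms(2)] by blast
  ultimately have "C (pc Pc k0) (v (pc P k0)) \<noteq> 0"
    by simp
  then show "pc Pc k0 \<noteq> 0" "v (pc Pc k0) = v (pc P k0)"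
    using vanishes_below_C_nonzero[OF vanishes] by auto
qed

lemma first_min_tiltE:
  obtains k0 where "k0 \<le> j" "pc P k0 \<noteq> 0" "\<And>k. k \<le> j \<Longrightarrow> pc P k \<noteq> 0 \<Longrightarrow> tilt k0 \<le> tilt k"
    "\<And>k. k < k0 \<Longrightarrow> pc P k \<noteq> 0 \<Longrightarrow> tilt k0 < tilt k"
proof -
  have "finite {k. k \<le> j \<and> pc P k \<noteq> 0}" "{k. k \<le> j \<and> pc P k \<noteq> 0} \<noteq> {}"
    using pc_0 by auto
  then obtain k0 where k0: "k0 \<in> {k. k \<le> j \<and> pc P k \<noteq> 0}"
    "\<And>k. k \<in> {k. k \<le> j \<and> pc P k \<noteq> 0} \<Longrightarrow> tilt k0 \<le> tilt k"
    "\<And>k. k \<in> {k. k \<le> j \<and> pc P k \<noteq> 0} \<Longrightarrow> k < k0 \<Longrightarrow> tilt k0 < tilt k"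
    using first_arg_minE[of "{k. k \<le> j \<and> pc P k \<noteq> 0}" tilt] by blast
  show ?thesis
    by (rule that) (use k0 in auto)
qed

abbreviation "intercept \<equiv> real_of_rat (v (pc P N)) - real_of_rat s * real N"

lemma of_rat_line: "real_of_rat (line k) = intercept + real_of_rat s * real k"
  by (rule of_rat_end_line)

lemma np_points_Pc:
  "np_points v Pc = {(real j, real_of_rat (v (pc Pc j))) | j. j \<le> N \<and> pc Pc j \<noteq> 0}"
  by (simp add: np_points_def degree_Pc)

lemma np_points_Pc_above: "(x, y) \<in> np_points v Pc \<Longrightarrow> intercept + real_of_rat s * x \<le> y"
  using line_le_v_pc_Pc by (auto simp: np_points_Pc of_rat_line[symmetric] of_rat_less_eq)

lemma np_points_Pc_vertex:
  "(real (N - q), intercept + real_of_rat s * real (N - q)) \<in> np_points v Pc"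
  using v_pc_Pc_vertex by (auto simp: np_points_Pc of_rat_line[symmetric])

lemma NP_Pc_vertex: "NP v Pc (real (N - q)) = ereal (intercept + real_of_rat s * real (N - q))"
  unfolding NP_eq_lower_hull
  by (rule lower_hull_on_line[OF np_points_Pc_vertex np_points_Pc_vertex _ _ np_points_Pc_above])
     auto

lemma NP_Pc_above_line: "ereal (intercept + real_of_rat s * x) \<le> NP v Pc x"
  unfolding NP_eq_lower_hull using np_points_Pc_above by (rule lower_hull_ge_line)

lemma NP_Pc_above_line_strict:
  assumes "real (N - q) < x"
  shows "ereal (intercept + real_of_rat s * x) < NP v Pc x"
  unfolding NP_eq_lower_hull
proof (rule lower_hull_gt_line[OF finite_np_points np_points_Pc_above,
                               where g = 1 and d = "- real (N - q)"])
  show "intercept + real_of_rat s * x' < y"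
    if pt: "(x', y) \<in> np_points v Pc" and right: "0 < 1 * x' + - real (N - q)" for x' y
  proof -
    obtain j where "x' = real j" "y = real_of_rat (v (pc Pc j))" "j \<le> N" "pc Pc j \<noteq> 0"
      using pt by (auto simp: np_points_Pc)
    moreover have "N - q < j"
      using right calculation(1) by linarith
    ultimately show ?thesis
      using line_less_v_pc_Pc by (simp add: of_rat_line[symmetric] of_rat_less)
  qed
next
  show "0 < 1 * x + - real (N - q)"
    using assms by linarith
qed

lemma dominated_by_slope_segment:
  assumes "(real k0, real_of_rat (v (pc P k0))) \<in> convex hull T"
    and "(real N, real_of_rat (v (pc P N))) \<in> convex hull T"
    and "k0 \<le> j" "j \<le> N" "pc P k0 \<noteq> 0" "v (pc P k0) + s * (of_nat j - of_nat k0) \<le> w"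
  shows "\<exists>y'\<le>real_of_rat w. (real j, y') \<in> convex hull T"
proof (rule dominated_by_segment[OF assms(1,2)])
  have "v (pc P N) \<le> v (pc P k0) + s * (of_nat N - of_nat k0)"
    using line_le_v_pc[of k0] assms(3-5) by (simp add: end_line_def algebra_simps)
  then show "real_of_rat (v (pc P N)) \<le>
      real_of_rat (v (pc P k0)) + real_of_rat s * (real N - real k0)"
    by (simp only: of_rat_less_eq flip: of_rat_affine)
  show "real_of_rat (v (pc P k0)) + real_of_rat s * (real j - real k0) \<le> real_of_rat w"
    using assms(6) by (simp only: of_rat_less_eq flip: of_rat_affine)
qed (use assms(3,4) in auto)

lemma NP_le_NP_Pc: "NP v P x \<le> NP v Pc x"
  unfolding NP_eq_lower_hull
proof (rule lower_hull_le_if_dominated)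
  fix x y assume "(x, y) \<in> np_points v Pc"
  then obtain j where j: "x = real j" "y = real_of_rat (v (pc Pc j))" "j \<le> N" "pc Pc j \<noteq> 0"
    by (auto simp: np_points_Pc)
  obtain k0 where k0: "k0 \<le> j" "pc P k0 \<noteq> 0" "\<And>k. k \<le> j \<Longrightarrow> pc P k \<noteq> 0 \<Longrightarrow> tilt k0 \<le> tilt k"
    using first_min_tiltE by metis
  have "v (pc P k0) + s * (of_nat j - of_nat k0) \<le> v (pc Pc j)"
    using v_pc_Pc_ge_tilt[OF k0(1) j(3) k0(3) j(4)] by (simp add: algebra_simps)
  moreover have "(real k0, real_of_rat (v (pc P k0))) \<in> convex hull np_points v P"
    "(real N, real_of_rat (v (pc P N))) \<in> convex hull np_points v P"
    using k0 j pc_degree by (auto simp: np_points_def intro!: hull_inc)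
  ultimately show "\<exists>y'\<le>y. (x, y') \<in> convex hull np_points v P"
    unfolding j(1,2) using k0(1,2) j(3) by (intro dominated_by_slope_segment)
qed

lemma NP_le_NP_Pc_with_last_point:
  "lower_hull (insert (real N, intercept + real_of_rat s * real N) (np_points v Pc)) x \<le> NP v P x"
  unfolding NP_eq_lower_hull
proof (rule lower_hull_le_if_dominated)
  fix x y assume "(x, y) \<in> np_points v P"
  then obtain j where j: "x = real j" "y = real_of_rat (v (pc P j))" "j \<le> N" "pc P j \<noteq> 0"
    by (auto simp: np_points_def)
  obtain k0 where k0: "k0 \<le> j" "pc P k0 \<noteq> 0" "\<And>k. k \<le> j \<Longrightarrow> pc P k \<noteq> 0 \<Longrightarrow> tilt k0 \<le> tilt k"
    "\<And>k. k < k0 \<Longrightarrow> pc P k \<noteq> 0 \<Longrightarrow> tilt k0 < tilt k"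
    using first_min_tiltE by metis
  have "v (pc P k0) + s * (of_nat j - of_nat k0) \<le> v (pc P j)"
    using k0(3)[OF order_refl j(4)] by (simp add: algebra_simps)
  moreover have "pc Pc k0 \<noteq> 0" "v (pc Pc k0) = v (pc P k0)"
    using v_pc_Pc_first_min_tilt[of k0] k0 j(3) by auto
  then have "(real k0, real_of_rat (v (pc P k0))) \<in>
      convex hull insert (real N, intercept + real_of_rat s * real N) (np_points v Pc)"
    using k0(1) j(3) by (force simp: np_points_Pc intro!: hull_inc)
  moreover have "(real N, real_of_rat (v (pc P N))) \<in>
      convex hull insert (real N, intercept + real_of_rat s * real N) (np_points v Pc)"
    by (rule hull_inc) (simp add: of_rat_line[symmetric])
  ultimately show "\<exists>y'\<le>y. (x, y') \<in>
      convex hull insert (real N, intercept + real_of_rat s * real N) (np_points v Pc)"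
    unfolding j(1,2) using k0(1,2) j(3) by (intro dominated_by_slope_segment)
qed

lemma NP_Pc_eq_NP:
  assumes "x \<le> real (N - q)"
  shows "NP v Pc x = NP v P x"
proof (rule antisym)
  have "real (N - q) < real N"
    using order_residue_root degree_pos by simp
  then have "NP v Pc x =
      lower_hull (insert (real N, intercept + real_of_rat s * real N) (np_points v Pc)) x"
    unfolding NP_eq_lower_hull using assms
    by (intro lower_hull_insert_right[OF np_points_Pc_vertex np_points_Pc_above, symmetric])
  then show "NP v Pc x \<le> NP v P x"
    using NP_le_NP_Pc_with_last_point by simp
qed (rule NP_le_NP_Pc)

lemma breakpoint_Pc: "breakpoint v Pc (real (N - q))"
  using NP_Pc_vertex NP_Pc_above_line NP_Pc_above_line_strict
  by (intro breakpointI_supporting_line[where a = intercept and b = "real_of_rat s"])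
     (auto simp: degree_Pc)

lemma NP_Pc_slope_gt:
  assumes "real (N - q) \<le> x" "x < y" "NP v Pc x \<noteq> \<infinity>"
  shows "NP v Pc x + ereal (real_of_rat s * (y - x)) < NP v Pc y"
  using assms NP_Pc_vertex NP_Pc_above_line_strict unfolding NP_eq_lower_hull
  by (intro lower_hull_slope_gt[OF finite_np_points]) auto

end

theorem proposition2p6:
  fixes p :: nat
    and v :: "'a::field_char_0 \<Rightarrow> rat"
    and teich :: "'k::field \<Rightarrow> 'a"
    and pw :: "rat \<Rightarrow> 'a"
    and C :: "'a \<Rightarrow> rat \<Rightarrow> 'k"
    and P :: "'a poly" and c :: 'k and q :: nat
  assumes L: "malcev_neumann p v teich pw C"
    and deg: "degree P > 0"
    and a0: "pc P 0 \<noteq> 0"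
    and aN: "pc P (degree P) \<noteq> 0"
    and root: "poly (res_poly v C P) c = 0"
    and mult: "q = order c (res_poly v C P)"
  shows "breakpoint v (pcompose P [:teich c * pw (s_max v P), 1:]) (real (degree P - q))
       \<and> (\<forall>x. 0 \<le> x \<and> x \<le> real (degree P - q) \<longrightarrow>
             NP v (pcompose P [:teich c * pw (s_max v P), 1:]) x = NP v P x)
       \<and> (\<forall>x y. real (degree P - q) \<le> x \<and> x < y \<and> y \<le> real (degree P) \<and>
             NP v (pcompose P [:teich c * pw (s_max v P), 1:]) x \<noteq> \<infinity> \<longrightarrow>
             NP v (pcompose P [:teich c * pw (s_max v P), 1:]) y >
             NP v (pcompose P [:teich c * pw (s_max v P), 1:]) x
               + ereal (real_of_rat (s_max v P) * (y - x)))"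
proof -
  interpret residue_root p v teich pw C P c
    using L deg a0 aN root by (intro residue_root.intro residue_root_axioms.intro)
  show ?thesis
    unfolding mult using breakpoint_Pc NP_Pc_eq_NP NP_Pc_slope_gt by auto
qed

end
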